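(* For all integers $3\le s<t$ there is a positive constant $C$ depending only on $s$ such that for every integer $n\ge 2$, $$ f_{s-1,t-1}^{(2)}\big(\lfloor \sqrt{\log n}\rfloor\big) \le f_{s,t}^{(3)}(n) \le C\log n . $$
   Context: For integers $k\le s<t$ and $n\ge 0$, $f_{s,t}^{(k)}(n)$ is defined as $$ f_{s,t}^{(k)}(n)=\min_{\mathcal{G}} \max\{ |W| : W\subseteq V(\mathcal{G}) \text{ and the induced subhypergraph } \mathcal{G}[W] \text{ contains no copy of } K_s^{(k)}\}, $$ where the minimum is over all $k$-uniform hypergraphs $\mathcal{G}$ on $n$ vertices containing no copy of $K_t^{(k)}$, and $K_r^{(k)}$ denotes the complete $k$-uniform hypergraph on $r$ vertices (so for $k=2$, $K_r^{(2)}=K_r$ and $f^{(2)}_{s,t}$ concerns graphs). All logarithms are natural logarithms. *)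

theory Defs
  imports Complex_Main
begin

definition uniform_hypergraph :: "nat \<Rightarrow> nat \<Rightarrow> nat set set \<Rightarrow> bool" where
  "uniform_hypergraph k n E \<longleftrightarrow> (\<forall>e\<in>E. e \<subseteq> {..<n} \<and> card e = k)"

definition is_clique :: "nat \<Rightarrow> nat set set \<Rightarrow> nat set \<Rightarrow> bool" where
  "is_clique k E S \<longleftrightarrow> (\<forall>e. e \<subseteq> S \<and> card e = k \<longrightarrow> e \<in> E)"

definition clique_free :: "nat \<Rightarrow> nat \<Rightarrow> nat set set \<Rightarrow> nat set \<Rightarrow> bool" where
  "clique_free k r E W \<longleftrightarrow> \<not> (\<exists>S. S \<subseteq> W \<and> finite S \<and> card S = r \<and> is_clique k E S)"

definition max_free_set :: "nat \<Rightarrow> nat \<Rightarrow> nat \<Rightarrow> nat set set \<Rightarrow> nat" where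
  "max_free_set k s n E = Max {card W | W. W \<subseteq> {..<n} \<and> clique_free k s E W}"

definition erdos_rogers :: "nat \<Rightarrow> nat \<Rightarrow> nat \<Rightarrow> nat \<Rightarrow> nat" where
  "erdos_rogers k s t n =
     Min {max_free_set k s n E | E. uniform_hypergraph k n E \<and> clique_free k t E {..<n}}"

end

theory Submission
  imports Defs "HOL-Library.FuncSet" "HOL-Library.Disjoint_Sets"
begin

text \<open>In a K_t^(3)-free 3-graph H on n \<ge> 2 \<cdot> 2^(m^2) vertices, a greedy
  Erd\H{o}s--Rado argument finds distinct vertices v_0, ..., v_m such that for j < l < p whether
  v_j v_l v_p is an edge of H depends only on j and l. The link graph {jl : v_j v_l v_m \<in> H} on m
  vertices is then K_(t-1)-free, and every K_(s-1)-free set of it maps to a K_s^(3)-free set of H.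

  Colour the pairs of [n] with s - 1 colours and let a < b < c be an edge iff ab and
  ac get different colours; pigeonhole at the least vertex shows that this 3-graph is
  K_t^(3)-free. A set of size s^2 q contains q^2 s-tuples no two of which share a pair, each of
  them spans a K_s^(3) for a fixed colour pattern of probability at least (s-1)^(-s^2), and these
  events are independent. A union bound over all sets of size s^2 q leaves a colouring with no
  K_s^(3)-free set of that size once q exceeds s^2 (s-1)^(s^2) ln n.\<close>

lemma card_eq_3_sorted:
  fixes I :: "'a::linorder set"
  assumes "card I = 3"
  obtains a b c where "a < b" "b < c" "I = {a, b, c}"
proof -
  obtain x y z where I: "I = {x, y, z}" "x \<noteq> y" "y \<noteq> z" "x \<noteq> z"
    using assms card_3_iff by metis
  consider "x < y" "y < z" | "x < z" "z < y" | "y < x" "x < z" | "y < z" "z < x"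
    | "z < x" "x < y" | "z < y" "y < x"
    using I(2-4) by (metis linorder_neqE)
  then show thesis
    by cases (use that I(1) in \<open>fastforce simp: insert_commute\<close>)+
qed

lemma card_eq_2_sorted:
  fixes I :: "'a::linorder set"
  assumes "card I = 2"
  obtains a b where "a < b" "I = {a, b}"
proof -
  obtain x y where "I = {x, y}" "x \<noteq> y"
    using assms card_2_iff by metis
  then show thesis
    using that by (metis insert_commute linorder_neqE)
qed

lemma sorted_triple_eq:
  fixes a b c a' b' c' :: "'a::linorder"
  assumes "a < b" "b < c" "a' < b'" "b' < c'" "{a, b, c} = {a', b', c'}"
  shows "a = a' \<and> b = b' \<and> c = c'"
  using assms by (smt (verit) insertCI insertE order.asym order.strict_trans singletonD)

lemma sorted_pair_eq:
  fixes a b a' b' :: "'a::linorder"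
  assumes "a < b" "a' < b'" "{a, b} = {a', b'}"
  shows "a = a' \<and> b = b'"
  using assms by (metis doubleton_eq_iff order.asym)

lemma clique_free_subset:
  "clique_free k s E W \<Longrightarrow> W' \<subseteq> W \<Longrightarrow> clique_free k s E W'"
  unfolding clique_free_def by auto

lemma clique_free_card_less:
  "finite W \<Longrightarrow> card W < s \<Longrightarrow> clique_free k s E W"
  unfolding clique_free_def by (metis card_mono not_le)

lemma clique_free_empty_hypergraph:
  assumes "k \<le> t"
  shows "clique_free k t {} W"
  unfolding clique_free_def is_clique_def
  using assms by (metis empty_iff obtain_subset_with_card_n)

lemma finite_free_set_cards:
  "finite {card W | W. W \<subseteq> {..<n} \<and> clique_free k s E W}"
  by (rule finite_subset[of _ "card ` Pow {..<n}"]) auto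

lemma card_le_max_free_set:
  "W \<subseteq> {..<n} \<Longrightarrow> clique_free k s E W \<Longrightarrow> card W \<le> max_free_set k s n E"
  unfolding max_free_set_def by (intro Max_ge[OF finite_free_set_cards]) blast

lemma max_free_set_attained:
  assumes "1 \<le> s"
  obtains W where "W \<subseteq> {..<n}" "clique_free k s E W" "card W = max_free_set k s n E"
proof -
  have "clique_free k s E {}"
    using assms by (intro clique_free_card_less) auto
  then have "{card W | W. W \<subseteq> {..<n} \<and> clique_free k s E W} \<noteq> {}"
    by blast
  from Max_in[OF finite_free_set_cards this] show thesis
    using that unfolding max_free_set_def by auto
qed

lemma max_free_set_le:
  assumes "1 \<le> s"
  shows "max_free_set k s n E \<le> n"
proof -
  obtain W where "W \<subseteq> {..<n}" "card W = max_free_set k s n E"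
    using max_free_set_attained[OF assms] by metis
  then show ?thesis
    using card_mono[of "{..<n}" W] by simp
qed

lemma finite_max_free_set_values:
  "finite {max_free_set k s n E | E. uniform_hypergraph k n E \<and> clique_free k t E {..<n}}"
  by (rule finite_subset[of _ "max_free_set k s n ` Pow (Pow {..<n})"])
     (auto simp: uniform_hypergraph_def)

lemma erdos_rogers_le:
  "uniform_hypergraph k n E \<Longrightarrow> clique_free k t E {..<n} \<Longrightarrow>
     erdos_rogers k s t n \<le> max_free_set k s n E"
  unfolding erdos_rogers_def by (intro Min_le[OF finite_max_free_set_values]) blast

lemma erdos_rogers_ge:
  assumes "k \<le> t"
    and "\<And>E. uniform_hypergraph k n E \<Longrightarrow> clique_free k t E {..<n} \<Longrightarrow> x \<le> max_free_set k s n E"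
  shows "x \<le> erdos_rogers k s t n"
proof -
  have "uniform_hypergraph k n {}" "clique_free k t {} {..<n}"
    using clique_free_empty_hypergraph[OF assms(1)] by (auto simp: uniform_hypergraph_def)
  then have "{max_free_set k s n E | E. uniform_hypergraph k n E \<and> clique_free k t E {..<n}} \<noteq> {}"
    by blast
  then show ?thesis
    unfolding erdos_rogers_def using assms(2)
    by (auto simp: Min_ge_iff[OF finite_max_free_set_values])
qed

lemma erdos_rogers_le_order:
  assumes "1 \<le> s" "k \<le> t"
  shows "erdos_rogers k s t n \<le> n"
proof -
  have "uniform_hypergraph k n {}"
    by (simp add: uniform_hypergraph_def)
  then have "erdos_rogers k s t n \<le> max_free_set k s n {}"
    using erdos_rogers_le clique_free_empty_hypergraph[OF assms(2)] by blast
  then show ?thesis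
    using max_free_set_le[OF assms(1)] order_trans by blast
qed

lemma one_le_erdos_rogers:
  assumes "1 < s" "k \<le> t" "1 \<le> n"
  shows "1 \<le> erdos_rogers k s t n"
proof (rule erdos_rogers_ge[OF assms(2)])
  fix E
  have "clique_free k s E {0}"
    using assms(1) by (intro clique_free_card_less) auto
  then show "1 \<le> max_free_set k s n E"
    using card_le_max_free_set[of "{0}" n k s E] assms(3) by simp
qed

section \<open>The lower bound\<close>

definition end_homogeneous :: "nat set set \<Rightarrow> nat list \<Rightarrow> nat set \<Rightarrow> bool" where
  "end_homogeneous H vs S \<longleftrightarrow>
     (\<forall>j l. j < l \<longrightarrow> l < length vs \<longrightarrow>
        (\<forall>x \<in> S \<union> set (drop (Suc l) vs). \<forall>y \<in> S \<union> set (drop (Suc l) vs).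
           {vs!j, vs!l, x} \<in> H \<longleftrightarrow> {vs!j, vs!l, y} \<in> H))"

lemma end_homogeneousD:
  assumes "end_homogeneous H vs S" "j < l" "l < length vs"
    "x \<in> S \<union> set (drop (Suc l) vs)" "y \<in> S \<union> set (drop (Suc l) vs)"
  shows "{vs!j, vs!l, x} \<in> H \<longleftrightarrow> {vs!j, vs!l, y} \<in> H"
  using assms unfolding end_homogeneous_def by blast

lemma end_homogeneous_Nil: "end_homogeneous H [] S"
  by (simp add: end_homogeneous_def)

text \<open>The new vertex v is added to the list and the reservoir shrinks to a class of
  S - {v} on which the link pattern towards v is constant; there are 2^(length vs) patterns.\<close>
lemma end_homogeneous_snoc:
  assumes "finite S" "2 \<le> card S" "end_homogeneous H vs S"
  obtains v S' where "v \<in> S" "S' \<subseteq> S - {v}" "end_homogeneous H (vs @ [v]) S'"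
    "card S \<le> card S' * 2 ^ Suc (length vs)"
proof -
  obtain v where v: "v \<in> S"
    using assms(2) by fastforce
  define pattern where "pattern x = {j. j < length vs \<and> {vs!j, v, x} \<in> H}" for x
  have "pattern \<in> (S - {v}) \<rightarrow> Pow {..<length vs}"
    by (auto simp: pattern_def)
  from pigeonhole_card[OF this] obtain P
    where P: "card (S - {v}) \<le> card (pattern -` {P} \<inter> (S - {v})) * 2 ^ length vs"
    using assms(1) by (auto simp: card_Pow mult.commute)
  define S' where "S' = pattern -` {P} \<inter> (S - {v})"
  have "card S \<le> 2 * card (S - {v})"
    using assms(1,2) v by simp
  then have card: "card S \<le> card S' * 2 ^ Suc (length vs)"
    using P by (simp add: S'_def)
  have "end_homogeneous H (vs @ [v]) S'"
    unfolding end_homogeneous_def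
  proof (intro allI impI ballI)
    fix j l x y
    assume jl: "j < l" and l: "l < length (vs @ [v])"
      and x: "x \<in> S' \<union> set (drop (Suc l) (vs @ [v]))"
      and y: "y \<in> S' \<union> set (drop (Suc l) (vs @ [v]))"
    show "{(vs @ [v])!j, (vs @ [v])!l, x} \<in> H \<longleftrightarrow> {(vs @ [v])!j, (vs @ [v])!l, y} \<in> H"
    proof (cases "l < length vs")
      case True
      have "S' \<union> set (drop (Suc l) (vs @ [v])) \<subseteq> S \<union> set (drop (Suc l) vs)"
        using True v by (auto simp: S'_def)
      then show ?thesis
        using end_homogeneousD[OF assms(3) jl True] x y jl True by (auto simp: nth_append)
    next
      case False
      then have "l = length vs" "x \<in> S'" "y \<in> S'"
        using l x y by auto
      then show ?thesis
        using jl by (auto simp: S'_def pattern_def nth_append)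
    qed
  qed
  moreover have "S' \<subseteq> S - {v}"
    by (auto simp: S'_def)
  ultimately show thesis
    using that v card by blast
qed

lemma end_homogeneous_exists:
  assumes "finite V" "i \<le> m" "2 * 2 ^ (m * m) \<le> card V"
  shows "\<exists>vs S. length vs = i \<and> distinct vs \<and> set vs \<subseteq> V \<and> S \<subseteq> V \<and> set vs \<inter> S = {}
      \<and> card V \<le> card S * 2 ^ (i * i) \<and> end_homogeneous H vs S"
  using assms(2)
proof (induction i)
  case 0
  show ?case
    by (intro exI[of _ "[]"] exI[of _ V]) (simp add: end_homogeneous_Nil)
next
  case (Suc i)
  then obtain vs S where vs: "length vs = i" "distinct vs" "set vs \<subseteq> V" "S \<subseteq> V"
    "set vs \<inter> S = {}" "card V \<le> card S * 2 ^ (i * i)" "end_homogeneous H vs S"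
    by auto
  have "i * i \<le> m * m"
    using Suc.prems by (simp add: mult_le_mono)
  then have "2 * 2 ^ (i * i) \<le> card S * 2 ^ (i * i)"
    using assms(3) vs(6) power_increasing[of "i * i" "m * m" "2::nat"] by linarith
  then have "2 \<le> card S"
    by simp
  then obtain v S' where v: "v \<in> S" "S' \<subseteq> S - {v}" "end_homogeneous H (vs @ [v]) S'"
    "card S \<le> card S' * 2 ^ Suc i"
    using end_homogeneous_snoc[OF finite_subset[OF vs(4) assms(1)] _ vs(7)] vs(1) by metis
  have "card V \<le> card S * 2 ^ (i * i)"
    by (fact vs(6))
  also have "\<dots> \<le> card S' * 2 ^ Suc i * 2 ^ (i * i)"
    using v(4) by simp
  also have "\<dots> = card S' * 2 ^ (Suc i + i * i)"
    by (simp add: power_add)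
  also have "\<dots> \<le> card S' * 2 ^ (Suc i * Suc i)"
    by (intro mult_le_mono2 power_increasing) auto
  finally have "card V \<le> card S' * 2 ^ (Suc i * Suc i)" .
  moreover have "distinct (vs @ [v])" "set (vs @ [v]) \<subseteq> V" "S' \<subseteq> V" "set (vs @ [v]) \<inter> S' = {}"
    using vs(2-5) v(1,2) by auto
  ultimately show ?case
    using vs(1) v(3) by (intro exI[of _ "vs @ [v]"] exI[of _ S']) simp
qed

lemma end_homogeneous_sequence:
  assumes "finite V" "2 * 2 ^ (m * m) \<le> card V"
  obtains vs S where "length vs = m" "distinct vs" "set vs \<subseteq> V" "S \<subseteq> V" "S \<noteq> {}"
    "set vs \<inter> S = {}" "end_homogeneous H vs S"
proof -
  obtain vs S where "length vs = m" "distinct vs" "set vs \<subseteq> V" "S \<subseteq> V"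
    "set vs \<inter> S = {}" "card V \<le> card S * 2 ^ (m * m)" "end_homogeneous H vs S"
    using end_homogeneous_exists[OF assms(1) order_refl assms(2)] by blast
  moreover have "S \<noteq> {}"
  proof
    assume "S = {}"
    with assms(2) \<open>card V \<le> card S * 2 ^ (m * m)\<close> show False
      by simp
  qed
  ultimately show thesis
    using that by blast
qed

definition link_graph :: "nat set set \<Rightarrow> (nat \<Rightarrow> nat) \<Rightarrow> nat \<Rightarrow> nat set set" where
  "link_graph H v m = {{i, j} | i j. i < j \<and> j < m \<and> {v i, v j, v m} \<in> H}"

locale homogeneous_sequence =
  fixes H :: "nat set set" and v :: "nat \<Rightarrow> nat" and m :: nat
  assumes inj: "inj_on v {..m}"
    and homogeneous: "\<And>j l p. j < l \<Longrightarrow> l < p \<Longrightarrow> p \<le> m \<Longrightarrow>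
                        {v j, v l, v p} \<in> H \<longleftrightarrow> {v j, v l, v m} \<in> H"
begin

lemma link_graph_mem:
  "a < b \<Longrightarrow> {a, b} \<in> link_graph H v m \<longleftrightarrow> b < m \<and> {v a, v b, v m} \<in> H"
  unfolding link_graph_def by (auto dest: sorted_pair_eq)

lemma uniform_link_graph: "uniform_hypergraph 2 m (link_graph H v m)"
  unfolding uniform_hypergraph_def link_graph_def by auto

lemma card_image_v: "A \<subseteq> {..m} \<Longrightarrow> card (v ` A) = card A"
  using inj by (meson card_image inj_on_subset)

lemma triple_image_v:
  assumes "A \<subseteq> {..m}" "e \<subseteq> v ` A" "card e = 3"
  obtains a b c where "a < b" "b < c" "{a, b, c} \<subseteq> A" "e = {v a, v b, v c}"
proof -
  define I where "I = {i \<in> A. v i \<in> e}"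
  have e: "e = v ` I"
    using assms(2) by (auto simp: I_def)
  then have "card I = 3"
    using assms(1,3) card_image_v[of I] by (auto simp: I_def)
  then obtain a b c where "a < b" "b < c" "I = {a, b, c}"
    by (rule card_eq_3_sorted)
  with e that show thesis
    by (auto simp: I_def)
qed

lemma is_clique_link_graph_lift:
  assumes "S \<subseteq> {..<m}" "is_clique 2 (link_graph H v m) S"
  shows "is_clique 3 H (v ` insert m S)"
  unfolding is_clique_def
proof (intro allI impI)
  fix e assume e: "e \<subseteq> v ` insert m S \<and> card e = 3"
  have "insert m S \<subseteq> {..m}"
    using assms(1) by auto
  then obtain a b c where abc: "a < b" "b < c" "{a, b, c} \<subseteq> insert m S" "e = {v a, v b, v c}"
    by (rule triple_image_v[OF _ conjunct1[OF e] conjunct2[OF e]])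
  then have "{a, b} \<subseteq> S" "c \<le> m"
    using assms(1) by auto
  then have "{a, b} \<in> link_graph H v m"
    using assms(2) abc(1) by (auto simp: is_clique_def)
  then show "e \<in> H"
    using link_graph_mem[OF abc(1)] homogeneous[OF abc(1,2) \<open>c \<le> m\<close>] abc(4) by simp
qed

lemma is_clique_link_graph_project:
  assumes "A \<subseteq> {..m}" "finite A" "is_clique 3 H (v ` A)"
  shows "is_clique 2 (link_graph H v m) (A - {Max A})"
  unfolding is_clique_def
proof (intro allI impI)
  fix e assume e: "e \<subseteq> A - {Max A} \<and> card e = 2"
  then obtain a b where ab: "a < b" "e = {a, b}"
    by (metis card_eq_2_sorted)
  define c where "c = Max A"
  have abA: "a \<in> A" "b \<in> A" "b \<noteq> c"
    using e ab by (auto simp: c_def)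
  then have "c \<in> A" "b \<le> c"
    using assms(2) by (auto simp: c_def intro!: Max_in)
  with abA have bc: "b < c" "c \<le> m"
    using assms(1) by auto
  have "card {v a, v b, v c} = 3"
    using card_image_v[of "{a, b, c}"] abA \<open>c \<in> A\<close> assms(1) ab(1) bc by auto
  moreover have "{v a, v b, v c} \<subseteq> v ` A"
    using abA \<open>c \<in> A\<close> by auto
  ultimately have "{v a, v b, v c} \<in> H"
    using assms(3) by (auto simp: is_clique_def)
  then show "e \<in> link_graph H v m"
    using homogeneous[OF ab(1) bc] link_graph_mem[OF ab(1)] ab(2) bc by simp
qed

lemma clique_free_link_graph:
  assumes "clique_free 3 t H (v ` {..m})" "1 \<le> t"
  shows "clique_free 2 (t - 1) (link_graph H v m) {..<m}"
  unfolding clique_free_def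
proof
  assume "\<exists>S. S \<subseteq> {..<m} \<and> finite S \<and> card S = t - 1 \<and> is_clique 2 (link_graph H v m) S"
  then obtain S where S: "S \<subseteq> {..<m}" "finite S" "card S = t - 1" "is_clique 2 (link_graph H v m) S"
    by blast
  have "m \<notin> S" "insert m S \<subseteq> {..m}"
    using S(1) by auto
  then have "card (v ` insert m S) = t"
    using S(2,3) assms(2) card_image_v[of "insert m S"] by simp
  moreover have "v ` insert m S \<subseteq> v ` {..m}"
    using S(1) by auto
  ultimately show False
    using assms(1) is_clique_link_graph_lift[OF S(1,4)] S(2) by (auto simp: clique_free_def)
qed

lemma clique_free_image_v:
  assumes "W \<subseteq> {..<m}" "clique_free 2 (s - 1) (link_graph H v m) W"
  shows "clique_free 3 s H (v ` W)"
  unfolding clique_free_def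
proof
  assume "\<exists>S. S \<subseteq> v ` W \<and> finite S \<and> card S = s \<and> is_clique 3 H S"
  then obtain S where S: "S \<subseteq> v ` W" "card S = s" "is_clique 3 H S"
    by blast
  define A where "A = {i \<in> W. v i \<in> S}"
  have A: "A \<subseteq> {..m}" "finite A" "S = v ` A"
    using assms(1) S(1) by (auto simp: A_def intro: finite_subset)
  then have "card A = s"
    using S(2) card_image_v by simp
  then have "card (A - {Max A}) = s - 1"
    using A(2) by (cases "A = {}") (auto simp: card_Diff_singleton_if)
  moreover have "A - {Max A} \<subseteq> W"
    by (auto simp: A_def)
  ultimately show False
    using assms(2) is_clique_link_graph_project[OF A(1,2)] S(3) A(2,3)
    by (auto simp: clique_free_def)
qed

lemma erdos_rogers_le_max_free_set:
  assumes "v ` {..m} \<subseteq> {..<n}" "clique_free 3 t H {..<n}" "2 \<le> s" "s < t"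
  shows "erdos_rogers 2 (s - 1) (t - 1) m \<le> max_free_set 3 s n H"
proof -
  have "clique_free 2 (t - 1) (link_graph H v m) {..<m}"
    using assms by (intro clique_free_link_graph clique_free_subset[OF assms(2)]) auto
  then have "erdos_rogers 2 (s - 1) (t - 1) m \<le> max_free_set 2 (s - 1) m (link_graph H v m)"
    by (intro erdos_rogers_le uniform_link_graph)
  moreover have "1 \<le> s - 1"
    using assms(3) by simp
  then obtain W where W: "W \<subseteq> {..<m}" "clique_free 2 (s - 1) (link_graph H v m) W"
    "card W = max_free_set 2 (s - 1) m (link_graph H v m)"
    by (rule max_free_set_attained)
  moreover have "W \<subseteq> {..m}"
    using W(1) by auto
  then have "card (v ` W) = card W" "v ` W \<subseteq> {..<n}"
    using assms(1) card_image_v[of W] by auto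
  ultimately show ?thesis
    using card_le_max_free_set[OF _ clique_free_image_v[OF W(1,2)], of n] by simp
qed

end

lemma nth_in_set_drop:
  assumes "l \<le> p" "p < length xs"
  shows "xs ! p \<in> set (drop l xs)"
proof -
  have "drop l xs ! (p - l) = xs ! p" "p - l < length (drop l xs)"
    using assms by simp_all
  then show ?thesis
    by (metis nth_mem)
qed

lemma homogeneous_sequence_of_end_homogeneous:
  assumes "end_homogeneous H vs S" "u \<in> S" "distinct vs" "set vs \<inter> S = {}"
  shows "homogeneous_sequence H (\<lambda>i. (vs @ [u]) ! i) (length vs)"
proof
  have "distinct (vs @ [u])"
    using assms(2-4) by auto
  then show "inj_on (\<lambda>i. (vs @ [u]) ! i) {..length vs}"
    by (intro inj_on_nth) auto
next
  fix j l p assume jlp: "j < l" "l < p" "p \<le> length vs"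
  then have l: "l < length vs"
    by simp
  have "(vs @ [u]) ! p \<in> S \<union> set (drop (Suc l) vs)"
  proof (cases "p = length vs")
    case True
    then show ?thesis
      using assms(2) by simp
  next
    case False
    then show ?thesis
      using jlp nth_in_set_drop[of "Suc l" p vs] by (simp add: nth_append)
  qed
  moreover have "u \<in> S \<union> set (drop (Suc l) vs)"
    using assms(2) by simp
  ultimately have "{vs ! j, vs ! l, (vs @ [u]) ! p} \<in> H \<longleftrightarrow> {vs ! j, vs ! l, u} \<in> H"
    by (rule end_homogeneousD[OF assms(1) jlp(1) l])
  moreover have "(vs @ [u]) ! j = vs ! j" "(vs @ [u]) ! l = vs ! l"
    using jlp(1) l by (simp_all add: nth_append)
  ultimately show "{(vs @ [u]) ! j, (vs @ [u]) ! l, (vs @ [u]) ! p} \<in> H \<longleftrightarrow>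
             {(vs @ [u]) ! j, (vs @ [u]) ! l, (vs @ [u]) ! length vs} \<in> H"
    by (simp only: nth_append_length)
qed

lemma erdos_rogers_2_le_erdos_rogers_3:
  assumes "2 \<le> s" "s < t" "2 * 2 ^ (m * m) \<le> n"
  shows "erdos_rogers 2 (s - 1) (t - 1) m \<le> erdos_rogers 3 s t n"
proof (rule erdos_rogers_ge)
  show "3 \<le> t"
    using assms by simp
  fix H assume "clique_free 3 t H {..<n}"
  obtain vs S where vs: "length vs = m" "distinct vs" "set vs \<subseteq> {..<n}" "S \<subseteq> {..<n}"
    "S \<noteq> {}" "set vs \<inter> S = {}" "end_homogeneous H vs S"
    using end_homogeneous_sequence[of "{..<n}" m] assms(3) by auto
  then obtain u where u: "u \<in> S"
    by blast
  have hom: "homogeneous_sequence H (\<lambda>i. (vs @ [u]) ! i) m"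
    using homogeneous_sequence_of_end_homogeneous[OF vs(7) u vs(2,6)] vs(1) by simp
  have "(vs @ [u]) ! i \<in> set (vs @ [u])" if "i \<le> m" for i
    using that vs(1) by (intro nth_mem) simp
  moreover have "set (vs @ [u]) \<subseteq> {..<n}"
    using vs(3,4) u by auto
  ultimately have image: "(\<lambda>i. (vs @ [u]) ! i) ` {..m} \<subseteq> {..<n}"
    by blast
  show "erdos_rogers 2 (s - 1) (t - 1) m \<le> max_free_set 3 s n H"
    by (rule homogeneous_sequence.erdos_rogers_le_max_free_set[OF hom image
          \<open>clique_free 3 t H {..<n}\<close> assms(1,2)])
qed

lemma two_mul_two_power_le_exp:
  assumes "4 \<le> k"
  shows "2 * 2 ^ k \<le> exp (real k)"
  using assms
proof (induction k rule: dec_induct)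
  case base
  have "(32::real) \<le> (5 / 2) ^ 4"
    by (simp add: power_numeral_reduce)
  also have "\<dots> \<le> exp 1 ^ 4"
    using exp_lower_Taylor_quadratic[of 1] by (intro power_mono) auto
  finally show ?case
    by (simp add: exp_of_nat_mult[symmetric])
next
  case (step k)
  have "2 * 2 ^ Suc k = 2 * 2 ^ k * (2::real)"
    by simp
  also have "\<dots> \<le> exp (real k) * exp 1"
    using step.IH exp_lower_Taylor_quadratic[of 1] by (intro mult_mono) auto
  also have "\<dots> = exp (real (Suc k))"
    by (simp add: mult_exp_exp add.commute)
  finally show ?case .
qed

lemma erdos_rogers_2_sqrt_log_le:
  assumes "3 \<le> s" "s < t" "2 \<le> n"
  shows "erdos_rogers 2 (s - 1) (t - 1) (nat \<lfloor>sqrt (ln (real n))\<rfloor>) \<le> erdos_rogers 3 s t n"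
proof -
  define m where "m = nat \<lfloor>sqrt (ln (real n))\<rfloor>"
  have "0 < ln (real n)"
    using assms(3) by simp
  show ?thesis
  proof (cases "m \<le> 1")
    case True
    have "erdos_rogers 2 (s - 1) (t - 1) m \<le> m"
      using assms by (intro erdos_rogers_le_order) auto
    also have "\<dots> \<le> 1"
      by (fact True)
    also have "1 \<le> erdos_rogers 3 s t n"
      using assms by (intro one_le_erdos_rogers) auto
    finally show ?thesis
      unfolding m_def .
  next
    case False
    have "real m \<le> sqrt (ln (real n))"
      using of_int_floor_le[of "sqrt (ln (real n))"] \<open>0 < ln (real n)\<close> by (simp add: m_def)
    then have "real m * real m \<le> sqrt (ln (real n)) * sqrt (ln (real n))"
      using \<open>0 < ln (real n)\<close> by (intro mult_mono) auto
    then have m: "real (m * m) \<le> ln (real n)"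
      using \<open>0 < ln (real n)\<close> by simp
    have "4 \<le> m * m"
      using False mult_le_mono[of 2 m 2 m] by simp
    then have "real (2 * 2 ^ (m * m)) \<le> exp (real (m * m))"
      using two_mul_two_power_le_exp[of "m * m"] by (simp only: of_nat_mult of_nat_power of_nat_numeral)
    also have "\<dots> \<le> exp (ln (real n))"
      using m by simp
    also have "\<dots> = real n"
      using assms(3) by simp
    finally have "2 * 2 ^ (m * m) \<le> n"
      by (simp only: of_nat_le_iff)
    then show ?thesis
      using erdos_rogers_2_le_erdos_rogers_3[of s t m n] assms unfolding m_def by simp
  qed
qed

section \<open>The upper bound\<close>

definition colour_hypergraph :: "(nat \<times> nat \<Rightarrow> nat) \<Rightarrow> nat \<Rightarrow> nat set set" where
  "colour_hypergraph \<chi> n = {{a, b, c} | a b c. a < b \<and> b < c \<and> c < n \<and> \<chi> (a, b) \<noteq> \<chi> (a, c)}"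

lemma colour_hypergraph_mem:
  assumes "a < b" "b < c"
  shows "{a, b, c} \<in> colour_hypergraph \<chi> n \<longleftrightarrow> c < n \<and> \<chi> (a, b) \<noteq> \<chi> (a, c)"
  using assms by (auto simp: colour_hypergraph_def dest: sorted_triple_eq)

lemma uniform_colour_hypergraph: "uniform_hypergraph 3 n (colour_hypergraph \<chi> n)"
  by (auto simp: uniform_hypergraph_def colour_hypergraph_def)

text \<open>Among the t - 1 pairs at the least vertex of a t-set, two share a colour.\<close>
lemma clique_free_colour_hypergraph:
  assumes colours: "\<And>a b. a < b \<Longrightarrow> b < n \<Longrightarrow> \<chi> (a, b) < r" and "r < t - 1"
  shows "clique_free 3 t (colour_hypergraph \<chi> n) {..<n}"
  unfolding clique_free_def
proof
  assume "\<exists>S. S \<subseteq> {..<n} \<and> finite S \<and> card S = t \<and> is_clique 3 (colour_hypergraph \<chi> n) S"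
  then obtain S where S: "S \<subseteq> {..<n}" "finite S" "card S = t" "is_clique 3 (colour_hypergraph \<chi> n) S"
    by blast
  define a where "a = Min S"
  have "S \<noteq> {}"
    using S(3) assms(2) by auto
  then have a: "a \<in> S"
    using S(2) by (simp add: a_def)
  have a_less: "a < b" if "b \<in> S - {a}" for b
    using Min_le[OF S(2), of b] that by (auto simp: a_def)
  have "(\<lambda>b. \<chi> (a, b)) ` (S - {a}) \<subseteq> {..<r}"
    using a_less S(1) colours by auto
  moreover have "r < card (S - {a})"
    using a S(2,3) assms(2) by simp
  ultimately have "\<not> inj_on (\<lambda>b. \<chi> (a, b)) (S - {a})"
    using card_inj_on_le[of "\<lambda>b. \<chi> (a, b)" "S - {a}" "{..<r}"] by auto
  then obtain b c where bc: "b \<in> S - {a}" "c \<in> S - {a}" "b < c" "\<chi> (a, b) = \<chi> (a, c)"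
    unfolding inj_on_def by (metis linorder_neqE_nat)
  have "{a, b, c} \<subseteq> S" "card {a, b, c} = 3"
    using a a_less[OF bc(1)] bc by auto
  then have "{a, b, c} \<in> colour_hypergraph \<chi> n"
    using S(4) by (auto simp: is_clique_def)
  then show False
    using colour_hypergraph_mem[OF a_less[OF bc(1)] bc(3)] bc(4) by simp
qed

definition tuple_pairs :: "(nat \<Rightarrow> 'a) \<Rightarrow> nat \<Rightarrow> ('a \<times> 'a) set" where
  "tuple_pairs x s = (\<lambda>(k, l). (x k, x l)) ` {(k, l). k < l \<and> l < s}"

text \<open>Colouring each pair (x k, x l) by l - 1 makes the two pairs at the least point of any
  triple of the tuple differ in colour.\<close>
definition pattern_coloured :: "(nat \<times> nat \<Rightarrow> nat) \<Rightarrow> (nat \<Rightarrow> nat) \<Rightarrow> nat \<Rightarrow> bool" where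
  "pattern_coloured \<chi> x s \<longleftrightarrow> (\<forall>k l. k < l \<longrightarrow> l < s \<longrightarrow> \<chi> (x k, x l) = l - 1)"

lemma finite_tuple_pairs: "finite (tuple_pairs x s)"
  and card_tuple_pairs_le: "card (tuple_pairs x s) \<le> s * s"
proof -
  have sub: "{(k, l). k < l \<and> l < s} \<subseteq> {..<s} \<times> {..<s}"
    by auto
  then have "finite {(k, l). k < l \<and> l < s}"
    by (rule finite_subset) simp
  then show "finite (tuple_pairs x s)"
    by (simp add: tuple_pairs_def)
  have "card (tuple_pairs x s) \<le> card {(k, l). k < l \<and> l < s}"
    unfolding tuple_pairs_def using \<open>finite {(k, l). k < l \<and> l < s}\<close> by (rule card_image_le)
  also have "\<dots> \<le> s * s"
    using card_mono[OF _ sub] by (simp add: card_cartesian_product)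
  finally show "card (tuple_pairs x s) \<le> s * s" .
qed

lemma tuple_pairs_subset:
  assumes "strict_mono_on {..<s} x" "x ` {..<s} \<subseteq> {..<n}"
  shows "tuple_pairs x s \<subseteq> {(a, b). a < b \<and> b < n}"
  using assms by (auto simp: tuple_pairs_def strict_mono_on_def)

lemma pattern_coloured_cong:
  "\<forall>z\<in>tuple_pairs x s. f z = g z \<Longrightarrow> pattern_coloured f x s = pattern_coloured g x s"
  by (auto simp: pattern_coloured_def tuple_pairs_def)

lemma is_clique_colour_hypergraph:
  assumes mono: "strict_mono_on {..<s} x" and "x ` {..<s} \<subseteq> {..<n}"
    and "pattern_coloured \<chi> x s"
  shows "is_clique 3 (colour_hypergraph \<chi> n) (x ` {..<s})"
  unfolding is_clique_def
proof (intro allI impI)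
  fix e assume e: "e \<subseteq> x ` {..<s} \<and> card e = 3"
  define I where "I = {i \<in> {..<s}. x i \<in> e}"
  have e_eq: "e = x ` I"
    using e by (auto simp: I_def)
  have "inj_on x I"
    using strict_mono_on_imp_inj_on[OF mono] by (rule inj_on_subset) (auto simp: I_def)
  then have "card I = 3"
    using e e_eq card_image by metis
  then obtain a b c where abc: "a < b" "b < c" "I = {a, b, c}"
    by (rule card_eq_3_sorted)
  then have "a < s" "b < s" "c < s"
    by (auto simp: I_def)
  then have "x a < x b" "x b < x c" "x c < n" "\<chi> (x a, x b) \<noteq> \<chi> (x a, x c)"
    using abc(1,2) assms(2,3) strict_mono_onD[OF mono] by (auto simp: pattern_coloured_def)
  then show "e \<in> colour_hypergraph \<chi> n"
    using colour_hypergraph_mem[of "x a" "x b" "x c"] e_eq abc(3) by simp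
qed

lemma bij_betw_PiE_restrict_split:
  fixes A D :: "'a set" and K :: "'b set"
  assumes "D \<subseteq> A"
  shows "bij_betw (\<lambda>f. (restrict f (A - D), restrict f D)) (PiE A (\<lambda>_. K))
           (PiE (A - D) (\<lambda>_. K) \<times> PiE D (\<lambda>_. K))"
proof -
  define merge :: "('a \<Rightarrow> 'b) \<times> ('a \<Rightarrow> 'b) \<Rightarrow> 'a \<Rightarrow> 'b"
    where "merge = (\<lambda>(g, h) x. if x \<in> D then h x else g x)"
  show ?thesis
  proof (rule bij_betw_byWitness[of _ merge])
    show "\<forall>f \<in> PiE A (\<lambda>_. K). merge (restrict f (A - D), restrict f D) = f"
    proof (intro ballI ext)
      fix f x assume "f \<in> PiE A (\<lambda>_. K)"
      then show "merge (restrict f (A - D), restrict f D) x = f x"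
        using assms PiE_arb[of f A _ x] by (auto simp: merge_def)
    qed
    show "\<forall>p \<in> PiE (A - D) (\<lambda>_. K) \<times> PiE D (\<lambda>_. K). (restrict (merge p) (A - D), restrict (merge p) D) = p"
    proof
      fix p assume "p \<in> PiE (A - D) (\<lambda>_. K) \<times> PiE D (\<lambda>_. K)"
      then obtain g h where p: "p = (g, h)" "g \<in> PiE (A - D) (\<lambda>_. K)" "h \<in> PiE D (\<lambda>_. K)"
        by blast
      have "restrict (merge p) (A - D) x = g x" "restrict (merge p) D x = h x" for x
        using p PiE_arb[of g "A - D" _ x] PiE_arb[of h D _ x] by (auto simp: merge_def)
      then show "(restrict (merge p) (A - D), restrict (merge p) D) = p"
        by (simp add: p(1) fun_eq_iff)
    qed
    show "(\<lambda>f. (restrict f (A - D), restrict f D)) ` PiE A (\<lambda>_. K) \<subseteq> PiE (A - D) (\<lambda>_. K) \<times> PiE D (\<lambda>_. K)"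
      using assms by (auto simp: restrict_PiE_iff PiE_iff)
    show "merge ` (PiE (A - D) (\<lambda>_. K) \<times> PiE D (\<lambda>_. K)) \<subseteq> PiE A (\<lambda>_. K)"
      using assms by (auto simp: merge_def PiE_iff extensional_def)
  qed
qed

lemma card_PiE_split:
  fixes A D :: "'a set" and K :: "'b set"
  assumes "D \<subseteq> A"
    and Q: "\<And>f g. (\<forall>x\<in>A - D. f x = g x) \<Longrightarrow> Q f = Q g"
    and R: "\<And>f g. (\<forall>x\<in>D. f x = g x) \<Longrightarrow> R f = R g"
  shows "card {f \<in> PiE A (\<lambda>_. K). Q f \<and> R f}
       = card {g \<in> PiE (A - D) (\<lambda>_. K). Q g} * card {h \<in> PiE D (\<lambda>_. K). R h}"
proof -
  let ?split = "\<lambda>f. (restrict f (A - D), restrict f D)"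
  have bij: "bij_betw ?split (PiE A (\<lambda>_. K)) (PiE (A - D) (\<lambda>_. K) \<times> PiE D (\<lambda>_. K))"
    by (rule bij_betw_PiE_restrict_split[OF assms(1)])
  have "Q (restrict f (A - D)) = Q f" "R (restrict f D) = R f" for f
    by (intro Q R; simp)+
  then have "{f \<in> PiE A (\<lambda>_. K). Q f \<and> R f}
      = {f \<in> PiE A (\<lambda>_. K). (\<lambda>(g, h). Q g \<and> R h) (?split f)}"
    by simp
  then have "card {f \<in> PiE A (\<lambda>_. K). Q f \<and> R f}
      = card (?split ` {f \<in> PiE A (\<lambda>_. K). (\<lambda>(g, h). Q g \<and> R h) (?split f)})"
    using inj_on_subset[OF bij_betw_imp_inj_on[OF bij]] by (simp add: card_image)
  also have "?split ` {f \<in> PiE A (\<lambda>_. K). (\<lambda>(g, h). Q g \<and> R h) (?split f)}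
      = {p \<in> ?split ` PiE A (\<lambda>_. K). (\<lambda>(g, h). Q g \<and> R h) p}"
    by blast
  also have "\<dots> = {g \<in> PiE (A - D) (\<lambda>_. K). Q g} \<times> {h \<in> PiE D (\<lambda>_. K). R h}"
    unfolding bij_betw_imp_surj_on[OF bij] by auto
  finally show ?thesis
    by (simp add: card_cartesian_product)
qed

text \<open>Under the uniform distribution on functions A \<rightarrow> K, events determined on D and on A - D
  are independent.\<close>
lemma card_PiE_independent_le:
  fixes A D :: "'a set" and K :: "'b set"
  assumes "D \<subseteq> A"
    and Q: "\<And>f g. (\<forall>x\<in>A - D. f x = g x) \<Longrightarrow> Q f = Q g"
    and R: "\<And>f g. (\<forall>x\<in>D. f x = g x) \<Longrightarrow> R f = R g"
    and bound: "real (card {h \<in> PiE D (\<lambda>_. K). R h}) \<le> \<rho> * real (card (PiE D (\<lambda>_. K)))"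
  shows "real (card {f \<in> PiE A (\<lambda>_. K). Q f \<and> R f}) \<le> \<rho> * real (card {f \<in> PiE A (\<lambda>_. K). Q f})"
proof -
  define c where "c = real (card {g \<in> PiE (A - D) (\<lambda>_. K). Q g})"
  have "card {f \<in> PiE A (\<lambda>_. K). Q f} = card {f \<in> PiE A (\<lambda>_. K). Q f \<and> True}"
    by simp
  also have "\<dots> = card {g \<in> PiE (A - D) (\<lambda>_. K). Q g} * card {h \<in> PiE D (\<lambda>_. K). True}"
    by (rule card_PiE_split[OF assms(1) Q]) simp_all
  finally have "real (card {f \<in> PiE A (\<lambda>_. K). Q f}) = c * real (card (PiE D (\<lambda>_. K)))"
    by (simp add: c_def)
  moreover have "real (card {f \<in> PiE A (\<lambda>_. K). Q f \<and> R f}) = c * real (card {h \<in> PiE D (\<lambda>_. K). R h})"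
    by (simp add: card_PiE_split[OF assms(1) Q R] c_def)
  moreover have "0 \<le> c"
    by (simp add: c_def)
  ultimately show ?thesis
    using mult_left_mono[OF bound \<open>0 \<le> c\<close>] by (simp add: mult_ac)
qed

lemma card_PiE_avoiding_independent:
  fixes D :: "'t \<Rightarrow> 'a set" and good :: "'t \<Rightarrow> ('a \<Rightarrow> 'b) \<Rightarrow> bool" and K :: "'b set"
  assumes "finite T" "0 \<le> \<rho>"
    and "\<And>\<tau>. \<tau> \<in> T \<Longrightarrow> D \<tau> \<subseteq> A"
    and "disjoint_family_on D T"
    and "\<And>\<tau> f g. \<tau> \<in> T \<Longrightarrow> (\<forall>x\<in>D \<tau>. f x = g x) \<Longrightarrow> good \<tau> f = good \<tau> g"
    and "\<And>\<tau>. \<tau> \<in> T \<Longrightarrow>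
      real (card {h \<in> PiE (D \<tau>) (\<lambda>_. K). \<not> good \<tau> h}) \<le> \<rho> * real (card (PiE (D \<tau>) (\<lambda>_. K)))"
  shows "real (card {f \<in> PiE A (\<lambda>_. K). \<forall>\<tau>\<in>T. \<not> good \<tau> f})
           \<le> \<rho> ^ card T * real (card (PiE A (\<lambda>_. K)))"
  using assms(1,3-)
proof (induction T rule: finite_induct)
  case empty
  show ?case
    by simp
next
  case (insert \<sigma> T)
  have outside: "(\<forall>\<tau>\<in>T. \<not> good \<tau> f) = (\<forall>\<tau>\<in>T. \<not> good \<tau> g)"
    if "\<forall>x\<in>A - D \<sigma>. f x = g x" for f g
  proof -
    have "good \<tau> f = good \<tau> g" if "\<tau> \<in> T" for \<tau>
    proof -
      have "D \<tau> \<inter> D \<sigma> = {}" "D \<tau> \<subseteq> A"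
        using insert.prems(1,2) insert.hyps(2) \<open>\<tau> \<in> T\<close> by (auto simp: disjoint_family_on_def)
      then show ?thesis
        using insert.prems(3)[of \<tau> f g] \<open>\<forall>x\<in>A - D \<sigma>. f x = g x\<close> \<open>\<tau> \<in> T\<close> by blast
    qed
    then show ?thesis
      by blast
  qed
  have "real (card {f \<in> PiE A (\<lambda>_. K). \<forall>\<tau>\<in>insert \<sigma> T. \<not> good \<tau> f})
      = real (card {f \<in> PiE A (\<lambda>_. K). (\<forall>\<tau>\<in>T. \<not> good \<tau> f) \<and> \<not> good \<sigma> f})"
    by (simp add: conj_commute)
  also have "\<dots> \<le> \<rho> * real (card {f \<in> PiE A (\<lambda>_. K). \<forall>\<tau>\<in>T. \<not> good \<tau> f})"
    using insert.prems(1) outside insert.prems(3)[of \<sigma>] insert.prems(4)[of \<sigma>]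
    by (intro card_PiE_independent_le[where D = "D \<sigma>"]) auto
  also have "\<dots> \<le> \<rho> * (\<rho> ^ card T * real (card (PiE A (\<lambda>_. K))))"
    using insert.prems by (intro mult_left_mono insert.IH assms(2)) (auto simp: disjoint_family_on_def)
  finally show ?case
    using insert.hyps by simp
qed

lemma card_PiE_not_le:
  assumes "finite D" "card D \<le> N" "finite K" "K \<noteq> {}" "h\<^sub>0 \<in> PiE D (\<lambda>_. K)" "P h\<^sub>0"
  shows "real (card {h \<in> PiE D (\<lambda>_. K). \<not> P h})
           \<le> (1 - 1 / real (card K) ^ N) * real (card (PiE D (\<lambda>_. K)))"
proof -
  define c where "c = real (card K) ^ card D"
  have K: "1 \<le> real (card K)"
    using assms(3,4) by (simp add: Suc_le_eq card_gt_0_iff)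
  have card_PiE_eq: "real (card (PiE D (\<lambda>_. K))) = c"
    using assms(1) by (simp add: card_PiE c_def)
  have "{h \<in> PiE D (\<lambda>_. K). \<not> P h} \<subseteq> PiE D (\<lambda>_. K) - {h\<^sub>0}"
    using assms(6) by auto
  then have "card {h \<in> PiE D (\<lambda>_. K). \<not> P h} \<le> card (PiE D (\<lambda>_. K)) - 1"
    using assms(1,3,5) by (metis card_Diff_singleton card_mono finite_Diff finite_PiE)
  moreover have "0 < card (PiE D (\<lambda>_. K))"
    using assms(1,3,5) by (auto simp: card_gt_0_iff intro: finite_PiE)
  ultimately have "real (card {h \<in> PiE D (\<lambda>_. K). \<not> P h}) \<le> c - 1"
    using card_PiE_eq by simp
  also have "\<dots> \<le> (1 - 1 / real (card K) ^ N) * c"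
  proof -
    have "c \<le> real (card K) ^ N"
      unfolding c_def using power_increasing[OF assms(2) K] .
    then have "c / real (card K) ^ N \<le> 1"
      using K by simp
    then show ?thesis
      by (simp add: algebra_simps)
  qed
  finally show ?thesis
    using card_PiE_eq by simp
qed

lemma card_not_pattern_coloured_le:
  assumes "strict_mono_on {..<s} x" "2 \<le> s"
  shows "real (card {h \<in> PiE (tuple_pairs x s) (\<lambda>_. {..<s - 1}). \<not> pattern_coloured h x s})
    \<le> (1 - 1 / real (s - 1) ^ (s * s)) * real (card (PiE (tuple_pairs x s) (\<lambda>_. {..<s - 1})))"
proof -
  define h\<^sub>0 where "h\<^sub>0 = restrict (\<lambda>(a, b). (THE l. l < s \<and> x l = b) - 1) (tuple_pairs x s)"
  have h\<^sub>0: "h\<^sub>0 (x k, x l) = l - 1" if "k < l" "l < s" for k l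
  proof -
    have "(THE l'. l' < s \<and> x l' = x l) = l"
      using strict_mono_on_imp_inj_on[OF assms(1)] that by (intro the_equality) (auto dest: inj_onD)
    then show ?thesis
      using that by (auto simp: h\<^sub>0_def tuple_pairs_def)
  qed
  moreover have "h\<^sub>0 \<in> extensional (tuple_pairs x s)"
    by (simp add: h\<^sub>0_def)
  ultimately have "h\<^sub>0 \<in> PiE (tuple_pairs x s) (\<lambda>_. {..<s - 1})" "pattern_coloured h\<^sub>0 x s"
    using assms(2) by (auto simp: PiE_iff tuple_pairs_def pattern_coloured_def)
  moreover have "{..<s - 1} \<noteq> {}"
    using assms(2) by (simp add: lessThan_empty_iff)
  ultimately show ?thesis
    using card_PiE_not_le[OF finite_tuple_pairs[of x s] card_tuple_pairs_le[of x s],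
        where K = "{..<s - 1}" and P = "\<lambda>h. pattern_coloured h x s"] by simp
qed

lemma clique_free_imp_not_pattern_coloured:
  assumes "clique_free 3 s (colour_hypergraph \<chi> n) W" "W \<subseteq> {..<n}"
    and "strict_mono_on {..<s} x" "x ` {..<s} \<subseteq> W"
  shows "\<not> pattern_coloured \<chi> x s"
proof
  assume "pattern_coloured \<chi> x s"
  moreover have "x ` {..<s} \<subseteq> {..<n}"
    using assms(2,4) by blast
  ultimately have "is_clique 3 (colour_hypergraph \<chi> n) (x ` {..<s})"
    using is_clique_colour_hypergraph[OF assms(3)] by blast
  moreover have "card (x ` {..<s}) = s"
    using card_image[OF strict_mono_on_imp_inj_on[OF assms(3)]] by simp
  ultimately show False
    using assms(1,4) by (auto simp: clique_free_def)
qed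

text \<open>Edge-disjoint tuples are pattern coloured independently.\<close>
lemma card_clique_free_colourings_le:
  fixes x :: "'t \<Rightarrow> nat \<Rightarrow> nat"
  assumes "finite T" "2 \<le> s" "W \<subseteq> {..<n}"
    and mono: "\<And>\<tau>. \<tau> \<in> T \<Longrightarrow> strict_mono_on {..<s} (x \<tau>)"
    and range: "\<And>\<tau>. \<tau> \<in> T \<Longrightarrow> x \<tau> ` {..<s} \<subseteq> W"
    and edge_disjoint: "disjoint_family_on (\<lambda>\<tau>. tuple_pairs (x \<tau>) s) T"
  defines "A \<equiv> {(a, b). a < b \<and> b < n}"
  shows "real (card {\<chi> \<in> PiE A (\<lambda>_. {..<s - 1}). clique_free 3 s (colour_hypergraph \<chi> n) W})
    \<le> (1 - 1 / real (s - 1) ^ (s * s)) ^ card T * real (card (PiE A (\<lambda>_. {..<s - 1})))"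
proof -
  have "finite A"
    by (rule finite_subset[of _ "{..<n} \<times> {..<n}"]) (auto simp: A_def)
  have "{\<chi> \<in> PiE A (\<lambda>_. {..<s - 1}). clique_free 3 s (colour_hypergraph \<chi> n) W}
      \<subseteq> {\<chi> \<in> PiE A (\<lambda>_. {..<s - 1}). \<forall>\<tau>\<in>T. \<not> pattern_coloured \<chi> (x \<tau>) s}"
    using clique_free_imp_not_pattern_coloured[OF _ assms(3) mono range] by blast
  then have "card {\<chi> \<in> PiE A (\<lambda>_. {..<s - 1}). clique_free 3 s (colour_hypergraph \<chi> n) W}
      \<le> card {\<chi> \<in> PiE A (\<lambda>_. {..<s - 1}). \<forall>\<tau>\<in>T. \<not> pattern_coloured \<chi> (x \<tau>) s}"
    by (rule card_mono[rotated]) (use finite_PiE[OF \<open>finite A\<close>, of "\<lambda>_. {..<s - 1}"] in auto)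
  also have "real \<dots> \<le> (1 - 1 / real (s - 1) ^ (s * s)) ^ card T * real (card (PiE A (\<lambda>_. {..<s - 1})))"
  proof (rule card_PiE_avoiding_independent[OF assms(1) _ _ edge_disjoint])
    show "0 \<le> 1 - 1 / real (s - 1) ^ (s * s)"
      using assms(2) by simp
    show "tuple_pairs (x \<tau>) s \<subseteq> A" if "\<tau> \<in> T" for \<tau>
      unfolding A_def using tuple_pairs_subset[OF mono[OF that]] range[OF that] assms(3) by blast
  qed (use pattern_coloured_cong card_not_pattern_coloured_le[OF mono assms(2)] in auto)
  finally show ?thesis
    by simp
qed

lemma strict_mono_on_nth_sorted_list_of_set:
  fixes W :: "'a::linorder set"
  assumes "finite W"
  shows "strict_mono_on {..<card W} (\<lambda>i. sorted_list_of_set W ! i)"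
    and "(\<lambda>i. sorted_list_of_set W ! i) ` {..<card W} \<subseteq> W"
proof -
  show "strict_mono_on {..<card W} (\<lambda>i. sorted_list_of_set W ! i)"
    using sorted_wrt_nth_less[OF strict_sorted_list_of_set[of W]] assms
    by (auto simp: strict_mono_on_def)
  show "(\<lambda>i. sorted_list_of_set W ! i) ` {..<card W} \<subseteq> W"
    using nth_mem[of _ "sorted_list_of_set W"] assms by auto
qed

text \<open>The tuple \<open>\<tau> = (i, j)\<close> takes its l-th point at offset i + l j of the l-th block of
  length s q. Two tuples sharing two positions are two lines through the same two points of
  the grid, hence equal.\<close>
definition grid_index :: "nat \<Rightarrow> nat \<Rightarrow> nat \<times> nat \<Rightarrow> nat \<Rightarrow> nat" where
  "grid_index s q \<tau> l = l * (s * q) + (fst \<tau> + l * snd \<tau>)"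

lemma grid_offset_less:
  fixes \<tau> :: "nat \<times> nat"
  assumes "\<tau> \<in> {..<q} \<times> {..<q}" "l < s"
  shows "fst \<tau> + l * snd \<tau> < s * q"
proof -
  have "fst \<tau> < q" "snd \<tau> \<le> q"
    using assms(1) by auto
  then have "fst \<tau> + l * snd \<tau> < q + l * q"
    by (intro add_less_le_mono mult_le_mono2)
  also have "\<dots> \<le> s * q"
    using assms(2) by (metis Suc_leI mult_Suc mult_le_mono1)
  finally show ?thesis .
qed

lemma grid_index_div:
  assumes "\<tau> \<in> {..<q} \<times> {..<q}" "l < s"
  shows "grid_index s q \<tau> l div (s * q) = l"
  using grid_offset_less[OF assms] by (intro div_nat_eqI) (auto simp: grid_index_def)

lemma grid_index_less:
  assumes "\<tau> \<in> {..<q} \<times> {..<q}" "l < s"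
  shows "grid_index s q \<tau> l < s * s * q"
proof -
  have "grid_index s q \<tau> l < Suc l * (s * q)"
    using grid_offset_less[OF assms] by (simp add: grid_index_def)
  also have "\<dots> \<le> s * s * q"
    using assms(2) by (metis Suc_leI mult.assoc mult_le_mono1)
  finally show ?thesis .
qed

lemma strict_mono_on_grid_index:
  assumes "\<tau> \<in> {..<q} \<times> {..<q}"
  shows "strict_mono_on {..<s} (grid_index s q \<tau>)"
proof (rule strict_mono_onI)
  fix k l assume "k \<in> {..<s}" "l \<in> {..<s}" "k < l"
  then have "grid_index s q \<tau> k < Suc k * (s * q)"
    using grid_offset_less[OF assms] by (simp add: grid_index_def)
  also have "\<dots> \<le> l * (s * q)"
    using \<open>k < l\<close> by (intro mult_le_mono1) simp
  also have "\<dots> \<le> grid_index s q \<tau> l"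
    by (simp add: grid_index_def)
  finally show "grid_index s q \<tau> k < grid_index s q \<tau> l" .
qed

lemma grid_index_eq_imp_eq:
  assumes \<tau>: "\<tau> \<in> {..<q} \<times> {..<q}" "\<tau>' \<in> {..<q} \<times> {..<q}"
    and "k < l" "l < s" "k' < l'" "l' < s"
    and eq: "grid_index s q \<tau> k = grid_index s q \<tau>' k'" "grid_index s q \<tau> l = grid_index s q \<tau>' l'"
  shows "\<tau> = \<tau>'"
proof -
  have "k = k'" "l = l'"
    using grid_index_div[OF \<tau>(1)] grid_index_div[OF \<tau>(2)] eq assms(3-6) by (metis order.strict_trans)+
  then have "fst \<tau> + k * snd \<tau> = fst \<tau>' + k * snd \<tau>'" "fst \<tau> + l * snd \<tau> = fst \<tau>' + l * snd \<tau>'"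
    using eq by (simp_all add: grid_index_def)
  then have "(l - k) * snd \<tau> = (l - k) * snd \<tau>'"
    by (simp add: diff_mult_distrib)
  then have "snd \<tau> = snd \<tau>'"
    using \<open>k < l\<close> by simp
  with \<open>fst \<tau> + k * snd \<tau> = fst \<tau>' + k * snd \<tau>'\<close> show ?thesis
    by (simp add: prod_eq_iff)
qed

lemma edge_disjoint_tuples:
  fixes W :: "'a::linorder set"
  assumes "finite W" "card W = s * s * q"
  obtains x where "\<And>\<tau>. \<tau> \<in> {..<q} \<times> {..<q} \<Longrightarrow> strict_mono_on {..<s} (x \<tau>)"
    "\<And>\<tau>. \<tau> \<in> {..<q} \<times> {..<q} \<Longrightarrow> x \<tau> ` {..<s} \<subseteq> W"
    "disjoint_family_on (\<lambda>\<tau>. tuple_pairs (x \<tau>) s) ({..<q} \<times> {..<q})"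
proof -
  define y where "y i = sorted_list_of_set W ! i" for i
  note y = strict_mono_on_nth_sorted_list_of_set[OF assms(1), folded y_def, unfolded assms(2)]
  have inj: "inj_on y {..<s * s * q}"
    using y(1) by (rule strict_mono_on_imp_inj_on)
  show thesis
  proof (rule that[of "\<lambda>\<tau>. y \<circ> grid_index s q \<tau>"])
    fix \<tau> assume \<tau>: "\<tau> \<in> {..<q} \<times> {..<q}"
    have "grid_index s q \<tau> ` {..<s} \<subseteq> {..<s * s * q}"
      using grid_index_less[OF \<tau>] by auto
    then show "strict_mono_on {..<s} (y \<circ> grid_index s q \<tau>)"
      "(y \<circ> grid_index s q \<tau>) ` {..<s} \<subseteq> W"
      using strict_mono_on_grid_index[OF \<tau>] y by (auto simp: strict_mono_on_def image_subset_iff)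
  next
    show "disjoint_family_on (\<lambda>\<tau>. tuple_pairs (y \<circ> grid_index s q \<tau>) s) ({..<q} \<times> {..<q})"
      unfolding disjoint_family_on_def
    proof (intro ballI impI, rule ccontr)
      fix \<tau> \<tau>' assume \<tau>: "\<tau> \<in> {..<q} \<times> {..<q}" "\<tau>' \<in> {..<q} \<times> {..<q}" "\<tau> \<noteq> \<tau>'"
        and "tuple_pairs (y \<circ> grid_index s q \<tau>) s \<inter> tuple_pairs (y \<circ> grid_index s q \<tau>') s \<noteq> {}"
      then obtain k l k' l' where kl: "k < l" "l < s" "k' < l'" "l' < s"
        and eq: "y (grid_index s q \<tau> k) = y (grid_index s q \<tau>' k')"
          "y (grid_index s q \<tau> l) = y (grid_index s q \<tau>' l')"
        unfolding tuple_pairs_def by auto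
      have "k < s" "k' < s"
        using kl by auto
      then have "grid_index s q \<tau> k = grid_index s q \<tau>' k'" "grid_index s q \<tau> l = grid_index s q \<tau>' l'"
        using inj_onD[OF inj eq(1)] inj_onD[OF inj eq(2)]
          grid_index_less[OF \<tau>(1)] grid_index_less[OF \<tau>(2)] kl by simp_all
      then show False
        using grid_index_eq_imp_eq[OF \<tau>(1,2) kl] \<tau>(3) by simp
    qed
  qed
qed

lemma card_clique_free_colourings_set_le:
  assumes "2 \<le> s" "W \<subseteq> {..<n}" "card W = s * s * q"
  defines "A \<equiv> {(a, b). a < b \<and> b < n}"
  shows "real (card {\<chi> \<in> PiE A (\<lambda>_. {..<s - 1}). clique_free 3 s (colour_hypergraph \<chi> n) W})
    \<le> (1 - 1 / real (s - 1) ^ (s * s)) ^ (q * q) * real (card (PiE A (\<lambda>_. {..<s - 1})))"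
proof -
  have "finite W"
    using assms(2) finite_subset by blast
  then obtain x where "\<And>\<tau>. \<tau> \<in> {..<q} \<times> {..<q} \<Longrightarrow> strict_mono_on {..<s} (x \<tau>)"
    "\<And>\<tau>. \<tau> \<in> {..<q} \<times> {..<q} \<Longrightarrow> x \<tau> ` {..<s} \<subseteq> W"
    "disjoint_family_on (\<lambda>\<tau>. tuple_pairs (x \<tau>) s) ({..<q} \<times> {..<q})"
    using edge_disjoint_tuples assms(3) by blast
  from card_clique_free_colourings_le[OF _ assms(1,2) this] show ?thesis
    by (simp add: A_def card_cartesian_product)
qed

lemma exists_colouring_without_large_clique_free_set:
  assumes "2 \<le> s" and small: "real (n choose (s * s * q)) * (1 - 1 / real (s - 1) ^ (s * s)) ^ (q * q) < 1"
  obtains \<chi> where "\<And>a b. a < b \<Longrightarrow> b < n \<Longrightarrow> \<chi> (a, b) < s - 1"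
    "\<And>W. W \<subseteq> {..<n} \<Longrightarrow> card W = s * s * q \<Longrightarrow> \<not> clique_free 3 s (colour_hypergraph \<chi> n) W"
proof -
  define P where "P = PiE {(a, b). a < b \<and> b < n} (\<lambda>_. {..<s - 1})"
  define \<W> where "\<W> = {W. W \<subseteq> {..<n} \<and> card W = s * s * q}"
  define bad where "bad W = {\<chi> \<in> P. clique_free 3 s (colour_hypergraph \<chi> n) W}" for W
  have "finite {(a, b). a < b \<and> b < n}"
    by (rule finite_subset[of _ "{..<n} \<times> {..<n}"]) auto
  then have "finite P"
    by (simp add: P_def finite_PiE)
  have "P \<noteq> {}"
    using assms(1) by (auto simp: P_def PiE_eq_empty_iff lessThan_empty_iff)
  have "finite \<W>"
    by (rule finite_subset[of _ "Pow {..<n}"]) (auto simp: \<W>_def)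
  have "real (card (\<Union>W\<in>\<W>. bad W)) \<le> (\<Sum>W\<in>\<W>. real (card (bad W)))"
    by (metis card_UN_le[OF \<open>finite \<W>\<close>] of_nat_le_iff of_nat_sum)
  also have "\<dots> \<le> (\<Sum>W\<in>\<W>. (1 - 1 / real (s - 1) ^ (s * s)) ^ (q * q) * real (card P))"
    using card_clique_free_colourings_set_le[OF assms(1)] by (intro sum_mono) (auto simp: \<W>_def bad_def P_def)
  also have "\<dots> = real (n choose (s * s * q)) * (1 - 1 / real (s - 1) ^ (s * s)) ^ (q * q) * real (card P)"
    using n_subsets[of "{..<n}" "s * s * q"] by (simp add: \<W>_def)
  also have "\<dots> < real (card P)"
    using small \<open>finite P\<close> \<open>P \<noteq> {}\<close> by (simp add: card_gt_0_iff)
  finally have "card (\<Union>W\<in>\<W>. bad W) < card P"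
    by simp
  moreover have "(\<Union>W\<in>\<W>. bad W) \<subseteq> P"
    by (auto simp: bad_def)
  ultimately have "\<not> P \<subseteq> (\<Union>W\<in>\<W>. bad W)"
    by (metis subset_antisym less_irrefl)
  then obtain \<chi> where "\<chi> \<in> P" "\<And>W. W \<in> \<W> \<Longrightarrow> \<chi> \<notin> bad W"
    by blast
  then show thesis
    by (intro that[of \<chi>]) (auto simp: P_def bad_def \<W>_def)
qed

lemma erdos_rogers_3_less:
  assumes "3 \<le> s" "s < t"
    and "real (n choose (s * s * q)) * (1 - 1 / real (s - 1) ^ (s * s)) ^ (q * q) < 1"
  shows "erdos_rogers 3 s t n < s * s * q"
proof -
  obtain \<chi> where colours: "\<And>a b. a < b \<Longrightarrow> b < n \<Longrightarrow> \<chi> (a, b) < s - 1"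
    and clique: "\<And>W. W \<subseteq> {..<n} \<Longrightarrow> card W = s * s * q \<Longrightarrow> \<not> clique_free 3 s (colour_hypergraph \<chi> n) W"
    using exists_colouring_without_large_clique_free_set[OF _ assms(3)] assms(1) by auto
  have "clique_free 3 t (colour_hypergraph \<chi> n) {..<n}"
    by (rule clique_free_colour_hypergraph[where r = "s - 1"]) (use colours assms(1,2) in auto)
  then have "erdos_rogers 3 s t n \<le> max_free_set 3 s n (colour_hypergraph \<chi> n)"
    by (intro erdos_rogers_le uniform_colour_hypergraph)
  moreover obtain W where W: "W \<subseteq> {..<n}" "clique_free 3 s (colour_hypergraph \<chi> n) W"
    "card W = max_free_set 3 s n (colour_hypergraph \<chi> n)"
    using max_free_set_attained assms(1) by (metis Suc_1 le_trans one_le_numeral)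
  moreover have "card W < s * s * q"
  proof (rule ccontr)
    assume "\<not> card W < s * s * q"
    then obtain W' where "W' \<subseteq> W" "card W' = s * s * q"
      by (meson not_less obtain_subset_with_card_n)
    then show False
      using clique[of W'] W(1) clique_free_subset[OF W(2)] by auto
  qed
  ultimately show ?thesis
    by simp
qed

lemma binomial_mul_power_less_one:
  fixes R :: real
  assumes "1 \<le> n" "1 \<le> R" "real w * ln (real n) < real m / R"
  shows "real (n choose w) * (1 - 1 / R) ^ m < 1"
proof -
  have "real (n choose w) \<le> real n ^ w"
    by (cases "w \<le> n") (simp_all add: binomial_le_pow binomial_eq_0 flip: of_nat_power)
  also have "\<dots> = exp (real w * ln (real n))"
    using assms(1) by (simp add: exp_of_nat_mult)
  finally have binomial: "real (n choose w) \<le> exp (real w * ln (real n))" .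
  have "(1 - 1 / R) ^ m \<le> exp (- (1 / R)) ^ m"
    using assms(2) exp_ge_add_one_self[of "- (1 / R)"] by (intro power_mono) auto
  also have "\<dots> = exp (- (real m / R))"
    by (simp add: exp_of_nat_mult[symmetric])
  finally have "real (n choose w) * (1 - 1 / R) ^ m \<le> exp (real w * ln (real n)) * exp (- (real m / R))"
    using binomial assms(2) by (intro mult_mono) auto
  also have "\<dots> < 1"
    using assms(3) by (simp add: exp_add[symmetric])
  finally show ?thesis .
qed

lemma half_le_ln_2: "1 / 2 \<le> ln (2::real)"
  using ln_le_minus_one[of "1 / 2 :: real"] by (simp add: ln_div)

lemma erdos_rogers_3_le_log:
  assumes "3 \<le> s" "s < t" "2 \<le> n"
  shows "real (erdos_rogers 3 s t n)
    \<le> real s * real s * (real s * real s * real (s - 1) ^ (s * s) + 2) * ln (real n)"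
proof -
  define R where "R = real (s - 1) ^ (s * s)"
  define L where "L = ln (real n)"
  define B where "B = real s * real s * R * L"
  define q where "q = nat \<lfloor>B\<rfloor> + 1"
  have "ln 2 \<le> L"
    using assms(3) by (simp add: L_def)
  then have "1 / 2 \<le> L"
    using half_le_ln_2 by linarith
  have "1 \<le> R"
    using assms(1) by (simp add: R_def)
  then have "0 \<le> B"
    using \<open>1 / 2 \<le> L\<close> by (simp add: B_def)
  then have "real q = of_int \<lfloor>B\<rfloor> + 1"
    by (simp add: q_def)
  then have q: "B < real q" "real q \<le> B + 1"
    using floor_correct[of B] by linarith+
  have "real (s * s * q) * L = real q * B / R"
    using \<open>1 \<le> R\<close> by (simp add: B_def field_simps)
  also have "\<dots> < real q * real q / R"
    using q(1) \<open>0 \<le> B\<close> \<open>1 \<le> R\<close> by (intro divide_strict_right_mono mult_strict_left_mono) auto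
  finally have "real (s * s * q) * ln (real n) < real (q * q) / R"
    by (simp add: L_def)
  then have "real (n choose (s * s * q)) * (1 - 1 / R) ^ (q * q) < 1"
    using assms(3) \<open>1 \<le> R\<close> by (intro binomial_mul_power_less_one) auto
  then have "erdos_rogers 3 s t n < s * s * q"
    unfolding R_def by (rule erdos_rogers_3_less[OF assms(1,2)])
  then have "erdos_rogers 3 s t n \<le> s * s * q"
    by simp
  then have "real (erdos_rogers 3 s t n) \<le> real s * real s * real q"
    by (simp only: of_nat_le_iff of_nat_mult[symmetric])
  also have "\<dots> \<le> real s * real s * (B + 2 * L)"
    using q(2) \<open>1 / 2 \<le> L\<close> by (intro mult_left_mono) simp_all
  also have "\<dots> = real s * real s * (real s * real s * R + 2) * L"
    by (simp add: B_def algebra_simps)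
  finally show ?thesis
    by (simp only: R_def L_def)
qed

theorem theorem1:
  fixes s :: nat
  assumes "3 \<le> s"
  shows "\<exists>C::real. C > 0 \<and>
           (\<forall>t n. s < t \<longrightarrow> 2 \<le> n \<longrightarrow>
              erdos_rogers 2 (s - 1) (t - 1) (nat \<lfloor>sqrt (ln (real n))\<rfloor>) \<le> erdos_rogers 3 s t n
            \<and> real (erdos_rogers 3 s t n) \<le> C * ln (real n))"
proof (intro exI[of _ "real s * real s * (real s * real s * real (s - 1) ^ (s * s) + 2)"]
    conjI allI impI)
  show "0 < real s * real s * (real s * real s * real (s - 1) ^ (s * s) + 2)"
    using assms by (intro mult_pos_pos add_nonneg_pos mult_nonneg_nonneg zero_le_power) auto
  fix t n :: nat
  assume "s < t" "2 \<le> n"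
  then show "erdos_rogers 2 (s - 1) (t - 1) (nat \<lfloor>sqrt (ln (real n))\<rfloor>) \<le> erdos_rogers 3 s t n"
    and "real (erdos_rogers 3 s t n)
      \<le> real s * real s * (real s * real s * real (s - 1) ^ (s * s) + 2) * ln (real n)"
    using erdos_rogers_2_sqrt_log_le erdos_rogers_3_le_log assms by blast+
qed

end
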